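(* Let $0<p_0<1$, $\epsilon>0$, $\omega\ge0$, $\gamma_0\ge\gamma\ge0$. Let $\omega(t),\epsilon_x(t),\epsilon_y(t),\delta\gamma_t$ be real-valued functions of time with $|\omega(t)|\le\omega$, $\sqrt{\epsilon_x^2(t)+\epsilon_y^2(t)}\le\epsilon$, $|\delta\gamma_t|\le\gamma$, and set $H(t)=[1+\omega(t)]I_z+\epsilon_x(t)I_x+\epsilon_y(t)I_y$, $\gamma_t=\gamma_0+\delta\gamma_t$. Let the qubit density matrix $\rho_t$ evolve according to $$\dot\rho_t=-i[H(t),\rho_t]+\gamma_t\Big(\sigma_-\rho_t\sigma_+-\tfrac12\sigma_+\sigma_-\rho_t-\tfrac12\rho_t\sigma_+\sigma_-\Big)$$ with $\rho_0=|0\rangle\langle0|$. Let $$T_a=\frac{2p_0}{\sqrt{4\epsilon^2+(\gamma_0+\gamma)^2}+(\gamma_0+\gamma)}.$$ Then for every $t\in[0,T_a]$, $\rho_t\in\mathcal{D}_a=\{\rho:\langle0|\rho|0\rangle\ge1-p_0\}$; equivalently, if a projective measurement of $\sigma_z$ is made at time $t$, the probability of failure $p=\langle1|\rho_t|1\rangle$ is at most $p_0$.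
   Context: $\sigma_x,\sigma_y,\sigma_z$ are the Pauli matrices $\begin{pmatrix}0&1\\1&0\end{pmatrix},\begin{pmatrix}0&-i\\i&0\end{pmatrix},\begin{pmatrix}1&0\\0&-1\end{pmatrix}$, $I_j=\frac12\sigma_j$, $\sigma_-=\frac12(\sigma_x-i\sigma_y)$, $\sigma_+=\frac12(\sigma_x+i\sigma_y)$, $[A,B]=AB-BA$. $|0\rangle=(1,0)^T$, $|1\rangle=(0,1)^T$ are the eigenvectors of $\sigma_z$ with eigenvalues $1,-1$. Units with $\hbar=1$. The probability of failure is the probability that a $\sigma_z$ measurement yields $|1\rangle$. *)

theory Defs
  imports "HOL-Analysis.Analysis"
begin

type_synonym qmat = "complex ^ 2 ^ 2"
type_synonym qvec = "complex ^ 2"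

definition mat2 :: "complex \<Rightarrow> complex \<Rightarrow> complex \<Rightarrow> complex \<Rightarrow> qmat" where
  "mat2 a b c d = vector [vector [a, b], vector [c, d]]"

definition sigma_x :: qmat where "sigma_x = mat2 0 1 1 0"
definition sigma_y :: qmat where "sigma_y = mat2 0 (- \<i>) \<i> 0"
definition sigma_z :: qmat where "sigma_z = mat2 1 0 0 (-1)"

definition I_x :: qmat where "I_x = (1/2) *\<^sub>R sigma_x"
definition I_y :: qmat where "I_y = (1/2) *\<^sub>R sigma_y"
definition I_z :: qmat where "I_z = (1/2) *\<^sub>R sigma_z"

definition cscale :: "complex \<Rightarrow> qmat \<Rightarrow> qmat" where
  "cscale c A = (\<chi> i j. c * A $ i $ j)"

definition sigma_minus :: qmat where
  "sigma_minus = (1/2) *\<^sub>R (sigma_x - cscale \<i> sigma_y)"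
definition sigma_plus :: qmat where
  "sigma_plus = (1/2) *\<^sub>R (sigma_x + cscale \<i> sigma_y)"

definition commutator :: "qmat \<Rightarrow> qmat \<Rightarrow> qmat" where
  "commutator A B = A ** B - B ** A"

definition ket0 :: qvec where "ket0 = vector [1, 0]"
definition ket1 :: qvec where "ket1 = vector [0, 1]"

definition outer :: "qvec \<Rightarrow> qvec \<Rightarrow> qmat" where
  "outer u v = (\<chi> i j. u $ i * cnj (v $ j))"

definition melem :: "qvec \<Rightarrow> qmat \<Rightarrow> qvec \<Rightarrow> complex" where
  "melem u A v = (\<Sum>i\<in>UNIV. cnj (u $ i) * (A *v v) $ i)"

definition Ham :: "real \<Rightarrow> real \<Rightarrow> real \<Rightarrow> qmat" where
  "Ham w ex ey = (1 + w) *\<^sub>R I_z + ex *\<^sub>R I_x + ey *\<^sub>R I_y"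

definition lindblad_rhs :: "qmat \<Rightarrow> real \<Rightarrow> qmat \<Rightarrow> qmat" where
  "lindblad_rhs H g rho =
     cscale (- \<i>) (commutator H rho)
     + g *\<^sub>R (sigma_minus ** rho ** sigma_plus
               - (1/2) *\<^sub>R (sigma_plus ** sigma_minus ** rho)
               - (1/2) *\<^sub>R (rho ** sigma_plus ** sigma_minus))"

definition D_a :: "real \<Rightarrow> qmat set" where
  "D_a p0 = {rho. melem ket0 rho ket0 \<in> \<real> \<and> Re (melem ket0 rho ket0) \<ge> 1 - p0}"

definition T_a :: "real \<Rightarrow> real \<Rightarrow> real \<Rightarrow> real \<Rightarrow> real" where
  "T_a p0 eps gamma0 gamma =
     2 * p0 / (sqrt (4 * eps^2 + (gamma0 + gamma)^2) + (gamma0 + gamma))"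

end

theory Submission
  imports Defs
begin

text \<open>
  Write \<open>p = \<langle>0|\<rho>|0\<rangle>\<close> for the success population and \<open>c = \<langle>0|\<rho>|1\<rangle>\<close> for the coherence.
  The master equation preserves the trace exactly, and the anti-Hermitian part of \<open>\<rho>\<close>
  decays, so \<open>\<rho>\<close> stays Hermitian of trace one. Its determinant \<open>p (1 - p) - |c|\<^sup>2\<close> then obeys
  \<open>det' = \<gamma>\<^sub>t (p\<^sup>2 - det)\<close>, so it can never become negative, which gives \<open>0 \<le> p \<le> 1\<close>.
  The coherence is then pumped at rate at most \<open>\<epsilon>/2\<close> (the detuning \<open>\<omega>(t)\<close> only rotates it),
  hence \<open>|c| \<le> \<epsilon> t / 2\<close>; the population therefore drops at rate at most
  \<open>(\<gamma>\<^sub>0 + \<gamma>) + \<epsilon>\<^sup>2 t / 2\<close>, i.e. \<open>1 - p \<le> (\<gamma>\<^sub>0 + \<gamma>) t + \<epsilon>\<^sup>2 t\<^sup>2 / 4\<close>, and \<open>T\<^sub>a\<close> is a lower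
  bound for the time at which this quadratic reaches \<open>p\<^sub>0\<close>.
\<close>

lemmas qubit_operator_defs = lindblad_rhs_def Ham_def cscale_def commutator_def
  sigma_minus_def sigma_plus_def sigma_x_def sigma_y_def sigma_z_def I_x_def I_y_def I_z_def mat2_def

lemma lindblad_rhs_Ham_11:
  "lindblad_rhs (Ham w ex ey) g r $ 1 $ 1 =
     - \<i> * ((ex - \<i>*ey)/2 * r$2$1 - (ex + \<i>*ey)/2 * r$1$2) - g * r$1$1"
  by (simp add: qubit_operator_defs matrix_matrix_mult_def sum_2;
      simp add: scaleR_conv_of_real field_simps; simp add: algebra_simps)

lemma lindblad_rhs_Ham_12:
  "lindblad_rhs (Ham w ex ey) g r $ 1 $ 2 =
     - \<i> * ((1+w) * r$1$2 + (ex - \<i>*ey)/2 * (r$2$2 - r$1$1)) - g/2 * r$1$2"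
  by (simp add: qubit_operator_defs matrix_matrix_mult_def sum_2;
      simp add: scaleR_conv_of_real field_simps; simp add: algebra_simps)

lemma lindblad_rhs_Ham_21:
  "lindblad_rhs (Ham w ex ey) g r $ 2 $ 1 =
     - \<i> * ((ex + \<i>*ey)/2 * (r$1$1 - r$2$2) - (1+w) * r$2$1) - g/2 * r$2$1"
  by (simp add: qubit_operator_defs matrix_matrix_mult_def sum_2;
      simp add: scaleR_conv_of_real field_simps; simp add: algebra_simps)

lemma lindblad_rhs_Ham_22:
  "lindblad_rhs (Ham w ex ey) g r $ 2 $ 2 =
     - \<i> * ((ex + \<i>*ey)/2 * r$1$2 - (ex - \<i>*ey)/2 * r$2$1) + g * r$1$1"
  by (simp add: qubit_operator_defs matrix_matrix_mult_def sum_2;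
      simp add: scaleR_conv_of_real field_simps; simp add: algebra_simps)

lemma has_vector_derivative_matrix_entry:
  fixes f :: "real \<Rightarrow> 'a::real_normed_vector ^ 'n ^ 'm"
  assumes "(f has_vector_derivative f') F"
  shows "((\<lambda>t. f t $ i $ j) has_vector_derivative f' $ i $ j) F"
  using bounded_linear.has_vector_derivative[OF bounded_linear_vec_nth
      bounded_linear.has_vector_derivative[OF bounded_linear_vec_nth assms]] .

lemma DERIV_nonneg_imp_nondecreasing_within:
  fixes f f' :: "real \<Rightarrow> real"
  assumes "0 \<le> a" and "a \<le> b"
    and deriv: "\<And>t. 0 \<le> t \<Longrightarrow> (f has_real_derivative f' t) (at t within {0..})"
    and nonneg: "\<And>t. a < t \<Longrightarrow> t < b \<Longrightarrow> 0 \<le> f' t"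
  shows "f a \<le> f b"
proof (rule DERIV_nonneg_imp_increasing_open[OF \<open>a \<le> b\<close>])
  show "continuous_on {a..b} f"
    using DERIV_continuous_on[OF deriv] by (rule continuous_on_subset) (use \<open>0 \<le> a\<close> in auto)
  fix t assume "a < t" "t < b"
  then have "(f has_real_derivative f' t) (at t within {0<..})"
    by (intro DERIV_subset[OF deriv]) (use \<open>0 \<le> a\<close> in auto)
  then show "\<exists>y. (f has_real_derivative y) (at t) \<and> 0 \<le> y"
    using nonneg[of t] \<open>a < t\<close> \<open>t < b\<close> \<open>0 \<le> a\<close> by (auto simp: at_within_open[of t "{0<..}"])
qed

lemma nonneg_if_DERIV_nonneg_where_neg:
  fixes f f' :: "real \<Rightarrow> real"
  assumes deriv: "\<And>t. 0 \<le> t \<Longrightarrow> (f has_real_derivative f' t) (at t within {0..})"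
    and "0 \<le> f 0"
    and nonneg: "\<And>t. 0 \<le> t \<Longrightarrow> f t < 0 \<Longrightarrow> 0 \<le> f' t"
    and "0 \<le> t"
  shows "0 \<le> f t"
proof (rule ccontr)
  assume "\<not> 0 \<le> f t"
  define Z where "Z = {0..t} \<inter> f -` {0..}"
  have "continuous_on {0..t} f"
    using DERIV_continuous_on[OF deriv] by (rule continuous_on_subset) auto
  then have "compact Z"
    unfolding Z_def compact_eq_bounded_closed
    by (auto intro: continuous_closed_preimage bounded_subset[of "{0..t}"])
  moreover have "0 \<in> Z" using assms(2,4) by (simp add: Z_def)
  ultimately obtain s where "s \<in> Z" and last: "\<And>r. r \<in> Z \<Longrightarrow> r \<le> s"
    using compact_attains_sup[of Z] by blast
  have "f s \<le> f t"
  proof (rule DERIV_nonneg_imp_nondecreasing_within[OF _ _ deriv])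
    fix r assume "s < r" "r < t"
    then have "f r < 0" using last[of r] \<open>s \<in> Z\<close> by (force simp: Z_def)
    then show "0 \<le> f' r" using nonneg[of r] \<open>s < r\<close> \<open>s \<in> Z\<close> by (simp add: Z_def)
  qed (use \<open>s \<in> Z\<close> in \<open>auto simp: Z_def\<close>)
  then show False using \<open>\<not> 0 \<le> f t\<close> \<open>s \<in> Z\<close> by (simp add: Z_def)
qed

lemma sqrt_le_if_DERIV_le_sqrt:
  fixes q q' :: "real \<Rightarrow> real"
  assumes deriv: "\<And>t. 0 \<le> t \<Longrightarrow> (q has_real_derivative q' t) (at t within {0..})"
    and nonneg: "\<And>t. 0 \<le> t \<Longrightarrow> 0 \<le> q t"
    and growth: "\<And>t. 0 \<le> t \<Longrightarrow> q' t \<le> c * sqrt (q t)"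
    and "q 0 = 0" and "0 \<le> c" and "0 \<le> t"
  shows "sqrt (q t) \<le> c * t / 2"
proof (rule field_le_epsilon)
  fix \<delta> :: real assume "0 < \<delta>"
  \<comment> \<open>The shift by \<open>\<delta>\<^sup>2\<close> keeps the square root differentiable where \<open>q\<close> vanishes.\<close>
  define r where "r s = sqrt (q s + \<delta>\<^sup>2)" for s
  have r_pos: "0 < r s" if "0 \<le> s" for s
    using nonneg[OF that] \<open>0 < \<delta>\<close> by (simp add: r_def add_nonneg_pos)
  have "((\<lambda>s. c * s / 2 - r s) has_real_derivative c / 2 - q' s / (2 * r s)) (at s within {0..})"
    if "0 \<le> s" for s
    using r_pos[OF that] unfolding r_def
    by (auto intro!: derivative_eq_intros deriv[OF that] simp: divide_simps)
  moreover have "0 \<le> c / 2 - q' s / (2 * r s)" if "0 \<le> s" for s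
  proof -
    have "q' s \<le> c * r s"
      using growth[OF that] mult_left_mono[OF _ \<open>0 \<le> c\<close>, of "sqrt (q s)" "r s"]
      by (simp add: r_def)
    then show ?thesis using r_pos[OF that] by (simp add: field_simps)
  qed
  ultimately have "c * 0 / 2 - r 0 \<le> c * t / 2 - r t"
    by (rule DERIV_nonneg_imp_nondecreasing_within[OF order_refl \<open>0 \<le> t\<close>]) auto
  moreover have "r 0 = \<delta>" using \<open>q 0 = 0\<close> \<open>0 < \<delta>\<close> by (simp add: r_def)
  moreover have "sqrt (q t) \<le> r t" by (simp add: r_def)
  ultimately show "sqrt (q t) \<le> c * t / 2 + \<delta>" by linarith
qed

lemma T_a_quadratic_le:
  fixes p eps gamma0 gamma t :: real
  assumes "0 < p" and "p \<le> 4" and "0 \<le> gamma0 + gamma"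
    and "0 \<le> t" and "t \<le> T_a p eps gamma0 gamma"
  shows "(gamma0 + gamma) * t + eps\<^sup>2 * t\<^sup>2 / 4 \<le> p"
proof -
  define G where "G = gamma0 + gamma"
  define k where "k = sqrt (4 * eps\<^sup>2 + G\<^sup>2) + G"
  define T where "T = T_a p eps gamma0 gamma"
  have T_eq: "T = 2 * p / k" by (simp add: T_def T_a_def k_def G_def)
  show ?thesis
  proof (cases "k = 0")
    case True
    then show ?thesis using assms by (simp add: T_a_def k_def G_def)
  next
    case False
    \<comment> \<open>\<open>k\<close> solves \<open>k\<^sup>2 = 4 eps\<^sup>2 + 2 G k\<close>; together with \<open>p \<le> 4\<close> this bounds the quadratic at \<open>T\<close>.\<close>
    have "0 < k" using False \<open>0 \<le> gamma0 + gamma\<close> by (simp add: k_def G_def order_less_le)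
    have k_sq: "k\<^sup>2 = 4 * eps\<^sup>2 + 2 * G * k"
      by (simp add: k_def power2_eq_square algebra_simps)
    have "G * t + eps\<^sup>2 * t\<^sup>2 / 4 \<le> G * T + eps\<^sup>2 * T\<^sup>2 / 4"
      using assms by (intro add_mono mult_left_mono divide_right_mono power_mono) (auto simp: G_def T_def)
    also have "\<dots> = p * (2 * G * k + eps\<^sup>2 * p) / k\<^sup>2"
      using \<open>0 < k\<close> by (simp add: T_eq field_simps power2_eq_square)
    also have "\<dots> \<le> p * (4 * eps\<^sup>2 + 2 * G * k) / k\<^sup>2"
      using assms mult_left_mono[of p 4 "eps\<^sup>2"]
      by (intro divide_right_mono mult_left_mono) (auto simp: mult.commute)
    also have "\<dots> = p" using \<open>0 < k\<close> by (simp add: k_sq[symmetric])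
    finally show ?thesis by (simp add: G_def)
  qed
qed

lemma melem_ket0_ket0: "melem ket0 A ket0 = A $ 1 $ 1"
  by (simp add: melem_def ket0_def sum_2 matrix_vector_mult_def)

locale driven_damped_qubit =
  fixes rho :: "real \<Rightarrow> qmat" and wf epsx epsy g :: "real \<Rightarrow> real"
  assumes decay_rate_nonneg: "\<And>t. 0 \<le> g t"
    and master_equation: "\<And>t. 0 \<le> t \<Longrightarrow>
      (rho has_vector_derivative lindblad_rhs (Ham (wf t) (epsx t) (epsy t)) (g t) (rho t))
        (at t within {0..})"
    and initial_state: "rho 0 = outer ket0 ket0"
begin

abbreviation rhs :: "real \<Rightarrow> qmat" where
  "rhs t \<equiv> lindblad_rhs (Ham (wf t) (epsx t) (epsy t)) (g t) (rho t)"

lemma entry_has_vector_derivative: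
  "0 \<le> t \<Longrightarrow> ((\<lambda>t. rho t $ i $ j) has_vector_derivative rhs t $ i $ j) (at t within {0..})"
  by (rule has_vector_derivative_matrix_entry[OF master_equation])

lemma initial_entries:
  "rho 0 $ 1 $ 1 = 1" "rho 0 $ 1 $ 2 = 0" "rho 0 $ 2 $ 1 = 0" "rho 0 $ 2 $ 2 = 0"
  by (simp_all add: initial_state outer_def ket0_def)

lemma trace_preserved:
  assumes "0 \<le> t"
  shows "rho t $ 2 $ 2 = 1 - rho t $ 1 $ 1"
proof -
  have "((\<lambda>t. rho t $ 1 $ 1 + rho t $ 2 $ 2) has_vector_derivative 0) (at s within {0..})"
    if "s \<in> {0..}" for s
    using has_vector_derivative_add[OF entry_has_vector_derivative[of s 1 1]
        entry_has_vector_derivative[of s 2 2]] that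
    by (simp add: lindblad_rhs_Ham_11 lindblad_rhs_Ham_22 algebra_simps)
  then obtain c where "\<And>s. s \<in> {0..} \<Longrightarrow> rho s $ 1 $ 1 + rho s $ 2 $ 2 = c"
    using has_vector_derivative_zero_constant[OF convex_real_interval(1)] by blast
  from this[of t] this[of 0] have "rho t $ 1 $ 1 + rho t $ 2 $ 2 = 1"
    using assms by (simp add: initial_entries)
  then show ?thesis by (simp add: algebra_simps)
qed

lemma hermitian_entries:
  assumes "0 \<le> t"
  shows "Im (rho t $ 1 $ 1) = 0" and "rho t $ 2 $ 1 = cnj (rho t $ 1 $ 2)"
proof -
  \<comment> \<open>Half the squared Frobenius norm of \<open>\<rho> - \<rho>\<^sup>\<dagger>\<close>, given that the trace is real.\<close>
  define E where "E s = 4 * (Im (rho s $ 1 $ 1))\<^sup>2 + (Re (rho s $ 2 $ 1) - Re (rho s $ 1 $ 2))\<^sup>2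
    + (Im (rho s $ 2 $ 1) + Im (rho s $ 1 $ 2))\<^sup>2" for s
  have "((\<lambda>s. - E s) has_real_derivative g s * (E s + 4 * (Im (rho s $ 1 $ 1))\<^sup>2)) (at s within {0..})"
    if "0 \<le> s" for s
    unfolding E_def
    by (auto intro!: derivative_eq_intros has_field_derivative_Re has_field_derivative_Im
        entry_has_vector_derivative[OF that]
        simp: lindblad_rhs_Ham_11 lindblad_rhs_Ham_12 lindblad_rhs_Ham_21 trace_preserved[OF that]
          power2_eq_square field_simps)
  then have "- E 0 \<le> - E t"
    by (rule DERIV_nonneg_imp_nondecreasing_within[OF order_refl \<open>0 \<le> t\<close>])
       (auto intro!: mult_nonneg_nonneg decay_rate_nonneg simp: E_def)
  then have "E t \<le> 0" by (simp add: E_def initial_entries)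
  then have "(Im (rho t $ 1 $ 1))\<^sup>2 = 0 \<and> (Re (rho t $ 2 $ 1) - Re (rho t $ 1 $ 2))\<^sup>2 = 0
      \<and> (Im (rho t $ 2 $ 1) + Im (rho t $ 1 $ 2))\<^sup>2 = 0"
    unfolding E_def by (smt (verit) zero_le_power2)
  then show "Im (rho t $ 1 $ 1) = 0" and "rho t $ 2 $ 1 = cnj (rho t $ 1 $ 2)"
    by (simp_all add: complex_eq_iff)
qed

definition drive :: "real \<Rightarrow> complex" where
  "drive t = Complex (epsx t) (epsy t)"

text \<open>Matrix index \<open>1\<close> stands for \<open>|0\<rangle>\<close> and index \<open>2\<close> for \<open>|1\<rangle>\<close>.\<close>

definition population :: "real \<Rightarrow> real" where
  "population t = Re (rho t $ 1 $ 1)"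

definition coherence :: "real \<Rightarrow> complex" where
  "coherence t = rho t $ 1 $ 2"

lemma norm_drive: "cmod (drive t) = sqrt ((epsx t)\<^sup>2 + (epsy t)\<^sup>2)"
  by (simp add: drive_def complex_norm)

lemma population_0: "population 0 = 1" and coherence_0: "coherence 0 = 0"
  by (simp_all add: population_def coherence_def initial_entries)

lemma population_has_derivative:
  assumes "0 \<le> t"
  shows "(population has_real_derivative
           - Im (drive t * coherence t) - g t * population t) (at t within {0..})"
  unfolding population_def coherence_def
  by (auto intro!: derivative_eq_intros has_field_derivative_Re entry_has_vector_derivative[OF assms]
      simp: lindblad_rhs_Ham_11 hermitian_entries[OF assms] drive_def field_simps)

lemma coherence_has_derivative:
  assumes "0 \<le> t"
  shows "(coherence has_vector_derivative
           - \<i> * (1 + wf t) * coherence t - \<i> * cnj (drive t) * (1 - 2 * population t) / 2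
           - g t / 2 * coherence t) (at t within {0..})"
proof -
  have "rho t $ 1 $ 1 = population t"
    using hermitian_entries(1)[OF assms] by (simp add: population_def complex_eq_iff)
  then have "rhs t $ 1 $ 2 = - \<i> * (1 + wf t) * coherence t
      - \<i> * cnj (drive t) * (1 - 2 * population t) / 2 - g t / 2 * coherence t"
    by (simp add: lindblad_rhs_Ham_12 trace_preserved[OF assms] coherence_def drive_def
        complex_eq_iff field_simps)
  with entry_has_vector_derivative[OF assms, of 1 2] show ?thesis
    by (simp add: coherence_def[abs_def])
qed

lemma coherence_sq_has_derivative:
  assumes "0 \<le> t"
  shows "((\<lambda>s. (cmod (coherence s))\<^sup>2) has_real_derivative
           - (1 - 2 * population t) * Im (drive t * coherence t)
           - g t * (cmod (coherence t))\<^sup>2) (at t within {0..})"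
  unfolding cmod_power2
  by (auto intro!: derivative_eq_intros has_field_derivative_Re has_field_derivative_Im
      coherence_has_derivative[OF assms] simp: drive_def power2_eq_square field_simps)

lemma coherence_sq_le_populations:
  assumes "0 \<le> t"
  shows "(cmod (coherence t))\<^sup>2 \<le> population t * (1 - population t)"
proof -
  define q where "q s = (cmod (coherence s))\<^sup>2" for s
  \<comment> \<open>The determinant of \<open>\<rho> s\<close>, which is Hermitian with trace one.\<close>
  define det where "det s = population s * (1 - population s) - q s" for s
  have deriv_det: "(det has_real_derivative g s * ((population s)\<^sup>2 - det s)) (at s within {0..})"
    if "0 \<le> s" for s
  proof -
    have "(q has_real_derivative - (1 - 2 * population s) * Im (drive s * coherence s) - g s * q s)
        (at s within {0..})"
      unfolding q_def[abs_def] by (rule coherence_sq_has_derivative[OF that])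
    then show ?thesis
      unfolding det_def
      by (auto intro!: derivative_eq_intros population_has_derivative[OF that]
          simp: algebra_simps power2_eq_square)
  qed
  have det_increasing_if_neg: "0 \<le> g s * ((population s)\<^sup>2 - det s)" if "det s < 0" for s
    by (intro mult_nonneg_nonneg decay_rate_nonneg)
       (use that zero_le_power2[of "population s"] in linarith)
  have "0 \<le> det t"
  proof (rule nonneg_if_DERIV_nonneg_where_neg[OF deriv_det])
    show "0 \<le> det 0" by (simp add: det_def q_def population_0 coherence_0)
  qed (use det_increasing_if_neg assms in auto)
  then show ?thesis by (simp add: det_def q_def)
qed

lemma population_bounds:
  assumes "0 \<le> t"
  shows "0 \<le> population t" and "population t \<le> 1"
proof -
  have "0 \<le> population t * (1 - population t)"
    by (rule order_trans[OF zero_le_power2 coherence_sq_le_populations[OF assms]])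
  then show "0 \<le> population t" and "population t \<le> 1"
    by (auto simp: zero_le_mult_iff)
qed

end

locale bounded_driven_damped_qubit = driven_damped_qubit +
  fixes eps G :: real
  assumes drive_le: "\<And>t. sqrt ((epsx t)\<^sup>2 + (epsy t)\<^sup>2) \<le> eps"
    and decay_rate_le: "\<And>t. g t \<le> G"
begin

lemma drive_bound_nonneg: "0 \<le> eps"
  by (rule order_trans[OF real_sqrt_ge_zero drive_le[of 0]]) simp

lemma abs_Im_drive_coherence_le: "\<bar>Im (drive t * coherence t)\<bar> \<le> eps * cmod (coherence t)"
proof -
  have "\<bar>Im (drive t * coherence t)\<bar> \<le> cmod (drive t) * cmod (coherence t)"
    by (metis abs_Im_le_cmod norm_mult)
  also have "\<dots> \<le> eps * cmod (coherence t)"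
    using drive_le[of t] by (intro mult_right_mono) (auto simp: norm_drive)
  finally show ?thesis .
qed

lemma coherence_bound:
  assumes "0 \<le> t"
  shows "cmod (coherence t) \<le> eps * t / 2"
proof -
  have growth: "- (1 - 2 * population s) * Im (drive s * coherence s) - g s * (cmod (coherence s))\<^sup>2
      \<le> eps * sqrt ((cmod (coherence s))\<^sup>2)" if "0 \<le> s" for s
  proof -
    have "\<bar>1 - 2 * population s\<bar> \<le> 1"
      using population_bounds[OF that] by (simp add: abs_le_iff)
    have "- (1 - 2 * population s) * Im (drive s * coherence s)
        \<le> \<bar>1 - 2 * population s\<bar> * \<bar>Im (drive s * coherence s)\<bar>"
      by (metis abs_ge_minus_self abs_mult minus_mult_left)
    also have "\<dots> \<le> 1 * (eps * cmod (coherence s))"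
      using \<open>\<bar>1 - 2 * population s\<bar> \<le> 1\<close> abs_Im_drive_coherence_le[of s]
      by (intro mult_mono) auto
    finally have "- (1 - 2 * population s) * Im (drive s * coherence s) \<le> eps * cmod (coherence s)"
      by simp
    moreover have "0 \<le> g s * (cmod (coherence s))\<^sup>2"
      using decay_rate_nonneg[of s] by simp
    ultimately show ?thesis by simp
  qed
  have "sqrt ((cmod (coherence t))\<^sup>2) \<le> eps * t / 2"
    by (rule sqrt_le_if_DERIV_le_sqrt[OF coherence_sq_has_derivative _ growth _ drive_bound_nonneg assms])
       (simp_all add: coherence_0)
  then show ?thesis by simp
qed

lemma failure_probability_bound:
  assumes "0 \<le> t"
  shows "1 - population t \<le> G * t + eps\<^sup>2 * t\<^sup>2 / 4"
proof -
  have "((\<lambda>s. G * s + eps\<^sup>2 * s\<^sup>2 / 4 + population s) has_real_derivative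
      G + eps\<^sup>2 * s / 2 - Im (drive s * coherence s) - g s * population s) (at s within {0..})"
    if "0 \<le> s" for s
    by (auto intro!: derivative_eq_intros population_has_derivative[OF that] simp: field_simps)
  moreover have "0 \<le> G + eps\<^sup>2 * s / 2 - Im (drive s * coherence s) - g s * population s"
    if "0 \<le> s" for s
  proof -
    have "Im (drive s * coherence s) \<le> eps * cmod (coherence s)"
      using abs_Im_drive_coherence_le[of s] by linarith
    also have "\<dots> \<le> eps * (eps * s / 2)"
      by (rule mult_left_mono[OF coherence_bound[OF that] drive_bound_nonneg])
    finally have "Im (drive s * coherence s) \<le> eps\<^sup>2 * s / 2"
      by (simp add: power2_eq_square)
    moreover have "g s * population s \<le> G"
      using population_bounds[OF that] decay_rate_nonneg[of s] decay_rate_le[of s]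
      by (metis mult_left_le order_trans)
    ultimately show ?thesis by linarith
  qed
  ultimately have "G * 0 + eps\<^sup>2 * 0\<^sup>2 / 4 + population 0 \<le> G * t + eps\<^sup>2 * t\<^sup>2 / 4 + population t"
    by (rule DERIV_nonneg_imp_nondecreasing_within[OF order_refl \<open>0 \<le> t\<close>]) auto
  then show ?thesis by (simp add: population_0)
qed

end

theorem theorem2:
  fixes p0 eps w gamma0 gamma :: real
    and wf epsx epsy dgamma :: "real \<Rightarrow> real"
    and rho :: "real \<Rightarrow> complex ^ 2 ^ 2"
  assumes "0 < p0" and "p0 < 1" and "eps > 0" and "w \<ge> 0"
    and "gamma0 \<ge> gamma" and "gamma \<ge> 0"
    and "\<And>t. \<bar>wf t\<bar> \<le> w"
    and "\<And>t. sqrt ((epsx t)^2 + (epsy t)^2) \<le> eps"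
    and "\<And>t. \<bar>dgamma t\<bar> \<le> gamma"
    and "\<And>t. t \<ge> 0 \<Longrightarrow>
           (rho has_vector_derivative
              lindblad_rhs (Ham (wf t) (epsx t) (epsy t)) (gamma0 + dgamma t) (rho t))
             (at t within {0..})"
    and "rho 0 = outer ket0 ket0"
  shows "\<forall>t \<in> {0 .. T_a p0 eps gamma0 gamma}. rho t \<in> D_a p0"
proof
  interpret bounded_driven_damped_qubit rho wf epsx epsy "\<lambda>t. gamma0 + dgamma t" eps "gamma0 + gamma"
  proof unfold_locales
    show "0 \<le> gamma0 + dgamma t" and "gamma0 + dgamma t \<le> gamma0 + gamma" for t
      using assms(5,6) assms(9)[of t] unfolding abs_le_iff by linarith+
  qed (use assms(8,10,11) in auto)
  fix t assume t: "t \<in> {0 .. T_a p0 eps gamma0 gamma}"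
  have "1 - population t \<le> (gamma0 + gamma) * t + eps\<^sup>2 * t\<^sup>2 / 4"
    using t by (intro failure_probability_bound) simp
  also have "\<dots> \<le> p0"
    using assms(1,2,5,6) t by (intro T_a_quadratic_le) auto
  finally show "rho t \<in> D_a p0"
    using hermitian_entries(1)[of t] t
    by (simp add: D_a_def melem_ket0_ket0 population_def complex_is_Real_iff)
qed

end
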